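(* Let $(M,g,J,\kappa)$ be an almost Kähler manifold of real dimension $2n$, $o\in M$, and $\{Z_1,\dots,Z_n\}$ a generalized normal holomorphic frame around $o$. Then for all $1\le i,j,r,s\le n$, $$L(Z_{\bar i},Z_j,Z_r,Z_{\bar s})(o)=-2R^J(Z_{\bar i},Z_j,Z_r,Z_{\bar s})(o)+2R(Z_{\bar i},Z_j,Z_r,Z_{\bar s})(o).$$
   Context: An almost Kähler manifold $(M,g,J,\kappa)$: $\kappa$ a symplectic form, $J$ an almost complex structure with $g(\cdot,\cdot)=\kappa(\cdot,J\cdot)$ a $J$-Hermitian Riemannian metric. $\nabla$ is the Levi-Civita connection of $g$, with curvature $R(X,Y,Z,W)=g(\nabla_X\nabla_YZ-\nabla_Y\nabla_XZ-\nabla_{[X,Y]}Z,W)$; everything is extended complex-multilinearly, and $Z_{\bar i}=\overline{Z_i}$. $B(X,Y)=J(\nabla_XJ)Y-(\nabla_{JX}J)Y$, $L(X,Y,Z,W)=g((\nabla_XB)(Y,Z),W)$, and $R^J(X,Y,Z,W)=g\big(\nabla_X(J\nabla_YZ)-\nabla_Y(J\nabla_XZ)-\nabla_{[X,Y]}(JZ),\,JW\big)$. A generalized normal holomorphic frame around $o$ is a local frame $\{Z_1,\dots,Z_n\}$ of $T^{1,0}_JM$ near $o$ such that, writing $\nabla_k=\nabla_{Z_k}$, $\nabla_{\bar k}=\nabla_{Z_{\bar k}}$: (1) $\nabla_kZ_{\bar i}(o)=0$; (2) $\nabla_kZ_i(o)$ is of type $(0,1)$; (3) $G_{r\bar s}:=g(Z_r,Z_{\bar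 s})$ satisfies $G_{r\bar s}(o)=\delta_{rs}$, $dG_{r\bar s}(o)=0$; (4) $\nabla_r\nabla_{\bar k}Z_i(o)=0$, for all indices. *)

theory Defs
  imports "HOL-Analysis.Analysis"
begin

text \<open>Local (chart) rendering: the manifold is replaced by an open set U of coordinates
  in real^'d, tensors are given by component matrices, complexified vector fields are
  maps real^'d => complex^'d.\<close>

definition pd :: "'d::finite \<Rightarrow> (real^'d \<Rightarrow> 'b::real_normed_vector) \<Rightarrow> real^'d \<Rightarrow> 'b" where
  "pd k f x = vector_derivative (\<lambda>t. f (x + t *\<^sub>R axis k 1)) (at 0)"

fun Dl :: "'d::finite list \<Rightarrow> (real^'d \<Rightarrow> 'b::real_normed_vector) \<Rightarrow> real^'d \<Rightarrow> 'b" where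
  "Dl [] f = f"
| "Dl (k # ks) f = pd k (Dl ks f)"

definition smooth_on :: "(real^'d::finite) set \<Rightarrow> (real^'d \<Rightarrow> 'b::real_normed_vector) \<Rightarrow> bool" where
  "smooth_on U f \<longleftrightarrow> (\<forall>ks. continuous_on U (Dl ks f) \<and>
      (\<forall>k. \<forall>x\<in>U. ((\<lambda>t. Dl ks f (x + t *\<^sub>R axis k 1)) has_vector_derivative Dl (k # ks) f x) (at 0)))"

definition cscale :: "complex \<Rightarrow> complex^'d::finite \<Rightarrow> complex^'d" where
  "cscale c v = (\<chi> a. c * v $ a)"

text \<open>Action of a real (1,1)-tensor with components M$a$b (M(\<partial>_b) = \<Sum>_a M$a$b \<partial>_a) on complex vectors.\<close>
definition jv :: "real^'d^'d \<Rightarrow> complex^'d \<Rightarrow> complex^'d::finite" where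
  "jv M v = (\<chi> a. \<Sum>b\<in>UNIV. complex_of_real (M $ a $ b) * v $ b)"

definition Japp :: "(real^'d \<Rightarrow> real^'d^'d) \<Rightarrow> (real^'d \<Rightarrow> complex^'d) \<Rightarrow> real^'d \<Rightarrow> complex^'d::finite" where
  "Japp J Y x = jv (J x) (Y x)"

definition gapp :: "(real^'d \<Rightarrow> real^'d^'d) \<Rightarrow> (real^'d \<Rightarrow> complex^'d) \<Rightarrow> (real^'d \<Rightarrow> complex^'d)
    \<Rightarrow> real^'d \<Rightarrow> complex" where
  "gapp g X Y x = (\<Sum>a\<in>UNIV. \<Sum>b\<in>UNIV. complex_of_real (g x $ a $ b) * X x $ a * Y x $ b)"

definition cconj :: "(real^'d \<Rightarrow> complex^'d::finite) \<Rightarrow> real^'d \<Rightarrow> complex^'d" where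
  "cconj Y x = (\<chi> a. cnj (Y x $ a))"

definition Gam :: "(real^'d \<Rightarrow> real^'d^'d) \<Rightarrow> real^'d \<Rightarrow> 'd::finite \<Rightarrow> 'd \<Rightarrow> 'd \<Rightarrow> real" where
  "Gam g x c a b = (1/2) * (\<Sum>d\<in>UNIV. matrix_inv (g x) $ c $ d *
      (pd a (\<lambda>y. g y $ b $ d) x + pd b (\<lambda>y. g y $ a $ d) x - pd d (\<lambda>y. g y $ a $ b) x))"

definition nabla :: "(real^'d \<Rightarrow> real^'d^'d) \<Rightarrow> (real^'d \<Rightarrow> complex^'d) \<Rightarrow> (real^'d \<Rightarrow> complex^'d)
    \<Rightarrow> real^'d \<Rightarrow> complex^'d::finite" where
  "nabla g X Y x = (\<chi> c. (\<Sum>a\<in>UNIV. X x $ a * pd a (\<lambda>y. Y y $ c) x)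
      + (\<Sum>a\<in>UNIV. \<Sum>b\<in>UNIV. complex_of_real (Gam g x c a b) * X x $ a * Y x $ b))"

definition bracket :: "(real^'d \<Rightarrow> complex^'d) \<Rightarrow> (real^'d \<Rightarrow> complex^'d) \<Rightarrow> real^'d \<Rightarrow> complex^'d::finite" where
  "bracket X Y x = (\<chi> c. \<Sum>a\<in>UNIV. X x $ a * pd a (\<lambda>y. Y y $ c) x - Y x $ a * pd a (\<lambda>y. X y $ c) x)"

definition nablaJ :: "(real^'d \<Rightarrow> real^'d^'d) \<Rightarrow> (real^'d \<Rightarrow> real^'d^'d) \<Rightarrow> (real^'d \<Rightarrow> complex^'d)
    \<Rightarrow> (real^'d \<Rightarrow> complex^'d) \<Rightarrow> real^'d \<Rightarrow> complex^'d::finite" where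
  "nablaJ g J X Y x = nabla g X (Japp J Y) x - Japp J (nabla g X Y) x"

definition Bt :: "(real^'d \<Rightarrow> real^'d^'d) \<Rightarrow> (real^'d \<Rightarrow> real^'d^'d) \<Rightarrow> (real^'d \<Rightarrow> complex^'d)
    \<Rightarrow> (real^'d \<Rightarrow> complex^'d) \<Rightarrow> real^'d \<Rightarrow> complex^'d::finite" where
  "Bt g J X Y x = Japp J (nablaJ g J X Y) x - nablaJ g J (Japp J X) Y x"

definition Lt :: "(real^'d \<Rightarrow> real^'d^'d) \<Rightarrow> (real^'d \<Rightarrow> real^'d^'d) \<Rightarrow> (real^'d \<Rightarrow> complex^'d)
    \<Rightarrow> (real^'d \<Rightarrow> complex^'d) \<Rightarrow> (real^'d \<Rightarrow> complex^'d) \<Rightarrow> (real^'d \<Rightarrow> complex^'d)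
    \<Rightarrow> real^'d \<Rightarrow> complex" where
  "Lt g J X Y Z W x = gapp g (\<lambda>y. nabla g X (Bt g J Y Z) y - Bt g J (nabla g X Y) Z y
      - Bt g J Y (nabla g X Z) y) W x"

definition Rm :: "(real^'d \<Rightarrow> real^'d^'d) \<Rightarrow> (real^'d \<Rightarrow> complex^'d)
    \<Rightarrow> (real^'d \<Rightarrow> complex^'d) \<Rightarrow> (real^'d \<Rightarrow> complex^'d) \<Rightarrow> (real^'d \<Rightarrow> complex^'d::finite)
    \<Rightarrow> real^'d \<Rightarrow> complex" where
  "Rm g X Y Z W x = gapp g (\<lambda>y. nabla g X (nabla g Y Z) y - nabla g Y (nabla g X Z) y
      - nabla g (bracket X Y) Z y) W x"

definition RJ :: "(real^'d \<Rightarrow> real^'d^'d) \<Rightarrow> (real^'d \<Rightarrow> real^'d^'d) \<Rightarrow> (real^'d \<Rightarrow> complex^'d)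
    \<Rightarrow> (real^'d \<Rightarrow> complex^'d) \<Rightarrow> (real^'d \<Rightarrow> complex^'d) \<Rightarrow> (real^'d \<Rightarrow> complex^'d::finite)
    \<Rightarrow> real^'d \<Rightarrow> complex" where
  "RJ g J X Y Z W x = gapp g (\<lambda>y. nabla g X (Japp J (nabla g Y Z)) y
      - nabla g Y (Japp J (nabla g X Z)) y - nabla g (bracket X Y) (Japp J Z) y) (Japp J W) x"

text \<open>Almost Kaehler structure on an open coordinate domain U:
  g$a$b = g(\<partial>_a,\<partial>_b), J$a$b as above, \<kappa>$a$b = \<kappa>(\<partial>_a,\<partial>_b).\<close>
definition almost_kahler :: "(real^'d::finite) set \<Rightarrow> (real^'d \<Rightarrow> real^'d^'d) \<Rightarrow> (real^'d \<Rightarrow> real^'d^'d)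
    \<Rightarrow> (real^'d \<Rightarrow> real^'d^'d) \<Rightarrow> bool" where
  "almost_kahler U g J \<kappa> \<longleftrightarrow> open U \<and> smooth_on U g \<and> smooth_on U J \<and> smooth_on U \<kappa> \<and>
    (\<forall>x\<in>U.
      J x ** J x = - mat 1 \<and>
      (\<forall>a b. g x $ a $ b = g x $ b $ a) \<and>
      (\<forall>v. v \<noteq> 0 \<longrightarrow> (\<Sum>a\<in>UNIV. \<Sum>b\<in>UNIV. g x $ a $ b * v $ a * v $ b) > 0) \<and>
      (\<forall>a b. (\<Sum>c\<in>UNIV. \<Sum>d\<in>UNIV. J x $ c $ a * J x $ d $ b * g x $ c $ d) = g x $ a $ b) \<and>
      (\<forall>a b. \<kappa> x $ a $ b = - \<kappa> x $ b $ a) \<and>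
      det (\<kappa> x) \<noteq> 0 \<and>
      (\<forall>a b c. pd a (\<lambda>y. \<kappa> y $ b $ c) x + pd b (\<lambda>y. \<kappa> y $ c $ a) x
               + pd c (\<lambda>y. \<kappa> y $ a $ b) x = 0) \<and>
      (\<forall>a b. g x $ a $ b = (\<Sum>c\<in>UNIV. \<kappa> x $ a $ c * J x $ c $ b)))"

definition gen_normal_hol_frame :: "(real^'d \<Rightarrow> real^'d^'d) \<Rightarrow> (real^'d \<Rightarrow> real^'d^'d)
    \<Rightarrow> ('n::finite \<Rightarrow> real^'d \<Rightarrow> complex^'d::finite) \<Rightarrow> real^'d \<Rightarrow> (real^'d) set \<Rightarrow> bool" where
  "gen_normal_hol_frame g J Z p V \<longleftrightarrow> open V \<and> p \<in> V \<and> (\<forall>i. smooth_on V (Z i)) \<and>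
    (\<forall>x\<in>V.
      (\<forall>i. jv (J x) (Z i x) = cscale \<i> (Z i x)) \<and>
      (\<forall>c. (\<Sum>i\<in>UNIV. cscale (c i) (Z i x)) = 0 \<longrightarrow> (\<forall>i. c i = 0)) \<and>
      (\<forall>v. jv (J x) v = cscale \<i> v \<longrightarrow> (\<exists>c. v = (\<Sum>i\<in>UNIV. cscale (c i) (Z i x))))) \<and>
    (\<forall>k i. nabla g (Z k) (cconj (Z i)) p = 0) \<and>
    (\<forall>k i. jv (J p) (nabla g (Z k) (Z i) p) = cscale (- \<i>) (nabla g (Z k) (Z i) p)) \<and>
    (\<forall>r s. gapp g (Z r) (cconj (Z s)) p = (if r = s then 1 else 0) \<and>
           (\<forall>a. pd a (gapp g (Z r) (cconj (Z s))) p = 0)) \<and>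
    (\<forall>r k i. nabla g (Z r) (nabla g (cconj (Z k)) (Z i)) p = 0)"

end

theory Submission
  imports Defs
begin

(* At o the frame conditions make nabla_{bar Z_i} Z_j, nabla_{Z_j} bar Z_i, nabla_{bar Z_i} Z_r and
   nabla_{Z_j} nabla_{bar Z_i} Z_r vanish (the first and the third are conjugates of condition (1)).
   As the Christoffel symbols are symmetric, [bar Z_i, Z_j](o) = 0 as well, so with
   P = nabla_{Z_j} Z_r both curvature terms reduce to their leading term:
   R = g(nabla_{bar Z_i} P, bar Z_s) and R^J = g(nabla_{bar Z_i} (J P), J bar Z_s)
     = -i g(nabla_{bar Z_i} (J P), bar Z_s).
   B is tensorial, so in L only nabla_{bar Z_i} (B(Z_j, Z_r)) survives at o; and because Z_j and
   Z_r are of type (1,0) on a whole neighbourhood of o, B(Z_j, Z_r) = 2 P + 2 i J P there. *)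

section \<open>Partial derivatives along coordinate lines\<close>

(* pd is a vector_derivative, hence an arbitrary value unless the restriction to the coordinate
   line is differentiable; has_pd records that it is. *)
definition has_pd :: "'d::finite \<Rightarrow> (real^'d \<Rightarrow> 'b::real_normed_vector) \<Rightarrow> real^'d \<Rightarrow> bool" where
  "has_pd k f x \<longleftrightarrow> (\<lambda>t. f (x + t *\<^sub>R axis k 1)) differentiable (at 0)"

lemma has_pd_iff:
  "has_pd k f x \<longleftrightarrow> (\<exists>D. ((\<lambda>t. f (x + t *\<^sub>R axis k 1)) has_vector_derivative D) (at 0))"
  unfolding has_pd_def using vector_derivative_works differentiableI_vector by blast

lemma has_pd_has_vector_derivative:
  "has_pd k f x \<Longrightarrow> ((\<lambda>t. f (x + t *\<^sub>R axis k 1)) has_vector_derivative pd k f x) (at 0)"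
  unfolding has_pd_def pd_def by (simp add: vector_derivative_works)

lemma pd_eqI:
  "((\<lambda>t. f (x + t *\<^sub>R axis k 1)) has_vector_derivative D) (at 0) \<Longrightarrow> pd k f x = D"
  unfolding pd_def by (rule vector_derivative_at)

lemma has_pd_const: "has_pd k (\<lambda>y. c) x"
  by (simp add: has_pd_def)

lemma has_pd_add: "has_pd k f x \<Longrightarrow> has_pd k h x \<Longrightarrow> has_pd k (\<lambda>y. f y + h y) x"
  by (simp add: has_pd_def)

lemma has_pd_diff: "has_pd k f x \<Longrightarrow> has_pd k h x \<Longrightarrow> has_pd k (\<lambda>y. f y - h y) x"
  by (simp add: has_pd_def)

lemma has_pd_mult:
  fixes f h :: "real^'d::finite \<Rightarrow> 'a::real_normed_algebra"
  shows "has_pd k f x \<Longrightarrow> has_pd k h x \<Longrightarrow> has_pd k (\<lambda>y. f y * h y) x"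
  by (simp add: has_pd_def)

lemma has_pd_divide:
  fixes f h :: "real^'d::finite \<Rightarrow> 'a::real_normed_field"
  shows "has_pd k f x \<Longrightarrow> has_pd k h x \<Longrightarrow> h x \<noteq> 0 \<Longrightarrow> has_pd k (\<lambda>y. f y / h y) x"
  by (simp add: has_pd_def)

lemma has_pd_sum:
  "(\<And>i. i \<in> I \<Longrightarrow> has_pd k (f i) x) \<Longrightarrow> has_pd k (\<lambda>y. \<Sum>i\<in>I. f i y) x"
  unfolding has_pd_def by (cases "finite I") auto

lemma has_pd_prod:
  fixes f :: "'i \<Rightarrow> real^'d::finite \<Rightarrow> 'a::real_normed_field"
  assumes "\<And>i. i \<in> I \<Longrightarrow> has_pd k (f i) x"
  shows "has_pd k (\<lambda>y. \<Prod>i\<in>I. f i y) x"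
proof -
  obtain D where "\<And>i. i \<in> I \<Longrightarrow> ((\<lambda>t. f i (x + t *\<^sub>R axis k 1)) has_derivative D i) (at 0)"
    using assms unfolding has_pd_def differentiable_def by metis
  then show ?thesis
    unfolding has_pd_def differentiable_def
    using has_derivative_prod[of I "\<lambda>i t. f i (x + t *\<^sub>R axis k 1)" D] by auto
qed

lemma has_pd_linear: "bounded_linear h \<Longrightarrow> has_pd k f x \<Longrightarrow> has_pd k (\<lambda>y. h (f y)) x"
  unfolding has_pd_iff by (metis bounded_linear.has_vector_derivative)

lemma pd_add:
  assumes "has_pd k f x" "has_pd k h x"
  shows "pd k (\<lambda>y. f y + h y) x = pd k f x + pd k h x"
  using has_vector_derivative_add[OF assms[THEN has_pd_has_vector_derivative]] by (rule pd_eqI)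

lemma pd_mult:
  fixes f h :: "real^'d::finite \<Rightarrow> 'a::real_normed_algebra"
  assumes "has_pd k f x" "has_pd k h x"
  shows "pd k (\<lambda>y. f y * h y) x = f x * pd k h x + pd k f x * h x"
  using pd_eqI[OF has_vector_derivative_mult[OF assms[THEN has_pd_has_vector_derivative]]] by simp

lemma pd_sum:
  assumes "\<And>i. i \<in> I \<Longrightarrow> has_pd k (f i) x"
  shows "pd k (\<lambda>y. \<Sum>i\<in>I. f i y) x = (\<Sum>i\<in>I. pd k (f i) x)"
  using has_vector_derivative_sum[OF assms[THEN has_pd_has_vector_derivative]] by (rule pd_eqI)

lemma pd_linear:
  assumes "bounded_linear h" "has_pd k f x"
  shows "pd k (\<lambda>y. h (f y)) x = h (pd k f x)"
  using bounded_linear.has_vector_derivative[OF assms(1) has_pd_has_vector_derivative[OF assms(2)]]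
  by (rule pd_eqI)

lemma has_pd_cnj: "has_pd k f x \<Longrightarrow> has_pd k (\<lambda>y. cnj (f y)) x"
  by (rule has_pd_linear[OF bounded_linear_cnj])

lemma pd_cnj: "has_pd k f x \<Longrightarrow> pd k (\<lambda>y. cnj (f y)) x = cnj (pd k f x)"
  by (rule pd_linear[OF bounded_linear_cnj])

lemma has_pd_of_real: "has_pd k f x \<Longrightarrow> has_pd k (\<lambda>y. of_real (f y)) x"
  by (rule has_pd_linear[OF bounded_linear_of_real])

lemma pd_cmult:
  fixes f :: "real^'d::finite \<Rightarrow> 'a::real_normed_algebra"
  shows "has_pd k f x \<Longrightarrow> pd k (\<lambda>y. c * f y) x = c * pd k f x"
  by (rule pd_linear[OF bounded_linear_mult_right])

lemma eventually_line_in_open: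
  fixes x :: "real^'d::finite"
  assumes "open S" "x \<in> S"
  shows "eventually (\<lambda>t. x + t *\<^sub>R axis k 1 \<in> S) (nhds 0)"
proof -
  have "open ((\<lambda>t::real. x + t *\<^sub>R axis k 1) -` S)"
    using assms(1) by (intro open_vimage continuous_intros)
  from eventually_nhds_in_open[OF this, of 0] show ?thesis
    using assms(2) by simp
qed

lemma has_pd_cong_open:
  assumes "open S" "x \<in> S" "\<And>y. y \<in> S \<Longrightarrow> f y = h y"
  shows "has_pd k f x \<longleftrightarrow> has_pd k h x"
proof -
  have "eventually (\<lambda>t. t \<in> UNIV \<longrightarrow> f (x + t *\<^sub>R axis k 1) = h (x + t *\<^sub>R axis k 1)) (nhds 0)"
    using eventually_line_in_open[OF assms(1,2), of k] by eventually_elim (simp add: assms(3))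
  then have "((\<lambda>t. f (x + t *\<^sub>R axis k 1)) has_vector_derivative D) (at 0) \<longleftrightarrow>
      ((\<lambda>t. h (x + t *\<^sub>R axis k 1)) has_vector_derivative D) (at 0)" for D
    by (rule has_vector_derivative_cong_ev) (simp add: assms)
  then show ?thesis
    unfolding has_pd_iff by simp
qed

lemma pd_cong_open:
  assumes "open S" "x \<in> S" "\<And>y. y \<in> S \<Longrightarrow> f y = h y"
  shows "pd k f x = pd k h x"
  unfolding pd_def using eventually_line_in_open[OF assms(1,2), of k]
  by (intro vector_derivative_cong_eq) (auto simp: assms(3) elim: eventually_mono)

lemma smooth_on_has_pd_Dl: "smooth_on S f \<Longrightarrow> x \<in> S \<Longrightarrow> has_pd k (Dl ks f) x"
  unfolding smooth_on_def has_pd_iff by blast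

lemma smooth_on_has_pd_linear:
  "smooth_on S f \<Longrightarrow> x \<in> S \<Longrightarrow> bounded_linear h \<Longrightarrow> has_pd k (\<lambda>y. h (f y)) x"
  using has_pd_linear smooth_on_has_pd_Dl[of S f x k "[]"] by simp

lemma smooth_on_has_pd_pd_linear:
  assumes "open S" "smooth_on S f" "x \<in> S" "bounded_linear h"
  shows "has_pd k (\<lambda>y. pd a (\<lambda>z. h (f z)) y) x"
proof -
  have "pd a (\<lambda>z. h (f z)) y = h (pd a f y)" if "y \<in> S" for y
    using pd_linear[OF assms(4) smooth_on_has_pd_Dl[OF assms(2) that, of a "[]"]] by simp
  moreover have "has_pd k (\<lambda>y. h (pd a f y)) x"
    using has_pd_linear[OF assms(4) smooth_on_has_pd_Dl[OF assms(2,3), of k "[a]"]] by simp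
  ultimately show ?thesis
    using has_pd_cong_open[OF assms(1,3), of "\<lambda>y. pd a (\<lambda>z. h (f z)) y" "\<lambda>y. h (pd a f y)"] by simp
qed

lemma bounded_linear_matrix_entry: "bounded_linear (\<lambda>M. M $ i $ j)"
  using bounded_linear_compose[OF bounded_linear_vec_nth bounded_linear_vec_nth] .

section \<open>Matrices and Christoffel symbols\<close>

lemma matrix_inv_right:
  fixes A :: "'a::field^'n::finite^'n"
  assumes "invertible A"
  shows "A ** matrix_inv A = mat 1"
  using assms unfolding invertible_def matrix_inv_def by (rule someI2_ex) blast

lemma matrix_inv_cramer:
  fixes A :: "real^'n::finite^'n"
  assumes "det A \<noteq> 0"
  shows "matrix_inv A $ c $ d = det (\<chi> i j. if j = c then axis d 1 $ i else A $ i $ j) / det A"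
proof -
  have "A *v (matrix_inv A *v axis d 1) = axis d 1"
    using matrix_inv_right[of A] assms by (simp add: matrix_vector_mul_assoc invertible_det_nz)
  then have "(matrix_inv A *v axis d 1) $ c
      = det (\<chi> i j. if j = c then axis d 1 $ i else A $ i $ j) / det A"
    using cramer[OF assms] by simp
  then show ?thesis
    by (simp add: matrix_vector_mult_basis column_def)
qed

lemma invertible_if_square_eq_neg_one:
  fixes M :: "'a::field^'n::finite^'n"
  assumes "M ** M = - mat 1"
  shows "invertible M"
proof -
  have "M ** (- M) = mat 1"
    using assms by (simp add: matrix_matrix_mult_def vec_eq_iff sum_negf)
  then show ?thesis
    unfolding invertible_right_inverse by blast
qed

lemma has_pd_det:
  fixes M :: "real^'d::finite \<Rightarrow> real^'n::finite^'n"
  assumes "\<And>i j. has_pd k (\<lambda>y. M y $ i $ j) x"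
  shows "has_pd k (\<lambda>y. det (M y)) x"
  unfolding det_def
  by (rule has_pd_sum, rule has_pd_mult[OF has_pd_const], rule has_pd_prod, rule assms)

lemma has_pd_matrix_inv:
  fixes M :: "real^'d::finite \<Rightarrow> real^'n::finite^'n"
  assumes "open S" "x \<in> S" "\<And>y. y \<in> S \<Longrightarrow> det (M y) \<noteq> 0"
    and "\<And>i j. has_pd k (\<lambda>y. M y $ i $ j) x"
  shows "has_pd k (\<lambda>y. matrix_inv (M y) $ c $ d) x"
proof -
  have "has_pd k (\<lambda>y. (\<chi> i j. if j = c then axis d 1 $ i else M y $ i $ j) $ i $ j) x" for i j
    by (cases "j = c") (simp_all add: has_pd_const assms(4))
  then have "has_pd k (\<lambda>y. det (\<chi> i j. if j = c then axis d 1 $ i else M y $ i $ j) / det (M y)) x"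
    using assms(2-4) by (intro has_pd_divide has_pd_det) auto
  moreover have "has_pd k (\<lambda>y. matrix_inv (M y) $ c $ d) x \<longleftrightarrow>
      has_pd k (\<lambda>y. det (\<chi> i j. if j = c then axis d 1 $ i else M y $ i $ j) / det (M y)) x"
    by (rule has_pd_cong_open[OF assms(1,2)]) (rule matrix_inv_cramer[OF assms(3)])
  ultimately show ?thesis
    by simp
qed

lemma almost_kahler_det_metric:
  assumes "almost_kahler U g J \<kappa>" "x \<in> U"
  shows "det (g x) \<noteq> 0"
proof -
  have "J x ** J x = - mat 1" "det (\<kappa> x) \<noteq> 0"
    and g_eq: "\<forall>a b. g x $ a $ b = (\<Sum>c\<in>UNIV. \<kappa> x $ a $ c * J x $ c $ b)"
    using assms unfolding almost_kahler_def by blast+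
  moreover from g_eq have "g x = \<kappa> x ** J x"
    by (simp add: matrix_matrix_mult_def vec_eq_iff)
  ultimately show ?thesis
    using invertible_if_square_eq_neg_one by (simp add: det_mul invertible_det_nz)
qed

lemma has_pd_Gam:
  assumes "open U" "x \<in> U" "smooth_on U g" "\<And>y. y \<in> U \<Longrightarrow> det (g y) \<noteq> 0"
  shows "has_pd k (\<lambda>y. Gam g y c a b) x"
proof -
  have g_entries: "has_pd k (\<lambda>y. g y $ i $ j) y" if "y \<in> U" for i j y
    using smooth_on_has_pd_linear[OF assms(3) that bounded_linear_matrix_entry] .
  have "has_pd k (\<lambda>y. matrix_inv (g y) $ c $ d) x" for d
    using has_pd_matrix_inv[OF assms(1,2,4) g_entries[OF assms(2)]] .
  moreover have "has_pd k (\<lambda>y. pd a' (\<lambda>z. g z $ i $ j) y) x" for a' i j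
    using smooth_on_has_pd_pd_linear[OF assms(1,3,2) bounded_linear_matrix_entry] .
  ultimately show ?thesis
    unfolding Gam_def by (intro has_pd_mult has_pd_const has_pd_sum has_pd_add has_pd_diff) auto
qed

lemma Gam_sym:
  assumes "open U" "x \<in> U" "\<And>y a b. y \<in> U \<Longrightarrow> g y $ a $ b = g y $ b $ a"
  shows "Gam g x c a b = Gam g x c b a"
proof -
  have "pd d (\<lambda>y. g y $ a $ b) x = pd d (\<lambda>y. g y $ b $ a) x" for d
    by (rule pd_cong_open[OF assms(1,2)]) (rule assms(3))
  then show ?thesis
    unfolding Gam_def by (simp add: algebra_simps)
qed

section \<open>The Levi-Civita connection in coordinates\<close>

lemma cconj_nth [simp]: "cconj A x $ c = cnj (A x $ c)"
  by (simp add: cconj_def)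

lemma cconj_cconj [simp]: "cconj (cconj A) = A"
  by (simp add: cconj_def vec_eq_iff fun_eq_iff)

lemma cscale_nth [simp]: "cscale s v $ c = s * v $ c"
  by (simp add: cscale_def)

lemma Japp_nth: "Japp J F x $ c = (\<Sum>b\<in>UNIV. complex_of_real (J x $ c $ b) * F x $ b)"
  by (simp add: Japp_def jv_def)

lemma Japp_cconj: "Japp J (cconj F) x = cconj (Japp J F) x"
  by (simp add: Japp_def jv_def vec_eq_iff)

lemma jv_zero [simp]: "jv M 0 = 0"
  by (simp add: jv_def vec_eq_iff)

lemma jv_diff: "jv M (v - w) = jv M v - jv M w"
  by (simp add: jv_def vec_eq_iff algebra_simps sum_subtractf)

lemma jv_cscale: "jv M (cscale s v) = cscale s (jv M v)"
  by (simp add: jv_def vec_eq_iff sum_distrib_left algebra_simps)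

lemma jv_jv:
  fixes M :: "real^'d::finite^'d"
  assumes "M ** M = - mat 1"
  shows "jv M (jv M v) = - v"
proof -
  have square: "(\<Sum>b\<in>UNIV. M $ a $ b * M $ b $ e) = (if a = e then -1 else 0)" for a e
    using arg_cong[OF assms, of "\<lambda>N. N $ a $ e"] by (simp add: matrix_matrix_mult_def mat_def)
  have "jv M (jv M v) $ a = (\<Sum>b\<in>UNIV. \<Sum>e\<in>UNIV. complex_of_real (M $ a $ b * M $ b $ e) * v $ e)"
    for a by (simp add: jv_def sum_distrib_left mult.assoc)
  also have "\<dots> a = (\<Sum>e\<in>UNIV. complex_of_real (\<Sum>b\<in>UNIV. M $ a $ b * M $ b $ e) * v $ e)" for a
    by (subst sum.swap) (simp add: sum_distrib_right)
  also have "\<dots> a = (\<Sum>e\<in>UNIV. if a = e then - v $ e else 0)" for a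
    unfolding square by (rule sum.cong) auto
  finally show ?thesis
    by (simp add: vec_eq_iff)
qed

lemma nabla_nth:
  "nabla g A B x $ c = (\<Sum>a\<in>UNIV. A x $ a * pd a (\<lambda>y. B y $ c) x)
    + (\<Sum>a\<in>UNIV. \<Sum>b\<in>UNIV. complex_of_real (Gam g x c a b) * A x $ a * B x $ b)"
  by (simp add: nabla_def)

lemma nabla_zero_direction: "A x = 0 \<Longrightarrow> nabla g A B x = 0"
  by (simp add: nabla_def vec_eq_iff)

lemma nabla_cscale_direction: "A x = cscale s (A' x) \<Longrightarrow> nabla g A B x = cscale s (nabla g A' B x)"
  by (simp add: nabla_def vec_eq_iff sum_distrib_left algebra_simps)

lemma nabla_cong_open:
  assumes "open S" "x \<in> S" "\<And>y. y \<in> S \<Longrightarrow> F y = G y"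
  shows "nabla g A F x = nabla g A G x"
proof -
  have "pd a (\<lambda>y. F y $ c) x = pd a (\<lambda>y. G y $ c) x" for a c
    by (rule pd_cong_open[OF assms(1,2)]) (simp add: assms(3))
  then show ?thesis
    by (simp add: nabla_def assms(2,3))
qed

lemma nabla_add:
  assumes "\<And>a c. has_pd a (\<lambda>y. F y $ c) x" "\<And>a c. has_pd a (\<lambda>y. G y $ c) x"
  shows "nabla g A (\<lambda>y. F y + G y) x = nabla g A F x + nabla g A G x"
  by (simp add: nabla_def vec_eq_iff pd_add assms sum.distrib algebra_simps)

lemma nabla_cscale:
  assumes "\<And>a c. has_pd a (\<lambda>y. F y $ c) x"
  shows "nabla g A (\<lambda>y. cscale s (F y)) x = cscale s (nabla g A F x)"
  by (simp add: nabla_def vec_eq_iff pd_cmult assms sum_distrib_left algebra_simps)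

lemma has_pd_nabla:
  assumes "\<And>a. has_pd k (\<lambda>y. A y $ a) x" "\<And>b. has_pd k (\<lambda>y. B y $ b) x"
    and "\<And>a b. has_pd k (\<lambda>y. pd a (\<lambda>z. B z $ b) y) x"
    and "\<And>c a b. has_pd k (\<lambda>y. Gam g y c a b) x"
  shows "has_pd k (\<lambda>y. nabla g A B y $ c) x"
  unfolding nabla_nth
  by (intro has_pd_add has_pd_sum has_pd_mult has_pd_of_real assms)

lemma has_pd_cscale:
  assumes "\<And>c. has_pd k (\<lambda>y. F y $ c) x"
  shows "has_pd k (\<lambda>y. cscale s (F y) $ c) x"
  by (simp add: has_pd_mult has_pd_const assms)

lemma has_pd_Japp:
  assumes "\<And>c b. has_pd k (\<lambda>y. J y $ c $ b) x" "\<And>b. has_pd k (\<lambda>y. F y $ b) x"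
  shows "has_pd k (\<lambda>y. Japp J F y $ c) x"
  unfolding Japp_nth by (intro has_pd_sum has_pd_mult has_pd_of_real assms)

lemma nabla_cconj:
  assumes "\<And>a c. has_pd a (\<lambda>y. B y $ c) x"
  shows "nabla g (cconj A) (cconj B) x = cconj (nabla g A B) x"
  by (simp add: nabla_nth vec_eq_iff pd_cnj assms)

lemma bracket_eq_nabla_diff:
  assumes "\<And>c a b. Gam g x c a b = Gam g x c b a"
  shows "bracket X Y x = nabla g X Y x - nabla g Y X x"
proof -
  have "(\<Sum>a\<in>UNIV. \<Sum>b\<in>UNIV. complex_of_real (Gam g x c a b) * Y x $ a * X x $ b)
      = (\<Sum>a\<in>UNIV. \<Sum>b\<in>UNIV. complex_of_real (Gam g x c a b) * X x $ a * Y x $ b)" for c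
    by (subst sum.swap) (simp add: assms mult_ac)
  then show ?thesis
    by (simp add: bracket_def nabla_nth vec_eq_iff sum_subtractf)
qed

lemma nabla_Japp_at_zero:
  assumes "Q x = 0" "\<And>a b. has_pd a (\<lambda>y. Q y $ b) x" "\<And>a c b. has_pd a (\<lambda>y. J y $ c $ b) x"
  shows "nabla g A (Japp J Q) x = jv (J x) (nabla g A Q x)"
proof -
  have J_entries: "has_pd a (\<lambda>y. complex_of_real (J y $ c $ b)) x" for a c b
    using has_pd_of_real[OF assms(3)] .
  have "pd a (\<lambda>y. Japp J Q y $ c) x
      = (\<Sum>b\<in>UNIV. complex_of_real (J x $ c $ b) * pd a (\<lambda>y. Q y $ b) x)"
    for a c
    by (simp add: Japp_nth pd_sum pd_mult has_pd_mult J_entries assms)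
  then have "nabla g A (Japp J Q) x $ c
      = (\<Sum>a\<in>UNIV. \<Sum>b\<in>UNIV. complex_of_real (J x $ c $ b) * (A x $ a * pd a (\<lambda>y. Q y $ b) x))" for c
    by (simp add: nabla_nth Japp_def assms(1) sum_distrib_left mult_ac)
  also have "\<dots> c = jv (J x) (nabla g A Q x) $ c" for c
    by (subst sum.swap) (simp add: nabla_nth jv_def assms(1) sum_distrib_left)
  finally show ?thesis
    by (simp add: vec_eq_iff)
qed

section \<open>The tensor B and the curvature terms at a point\<close>

lemma gapp_cong_left: "F x = G x \<Longrightarrow> gapp g F W x = gapp g G W x"
  by (simp add: gapp_def)

lemma gapp_linear_left:
  "F x = cscale \<alpha> (A x) + cscale \<beta> (B x) \<Longrightarrow>
    gapp g F W x = \<alpha> * gapp g A W x + \<beta> * gapp g B W x"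
  by (simp add: gapp_def sum_distrib_left sum.distrib algebra_simps)

lemma gapp_cscale_right: "W' x = cscale s (W x) \<Longrightarrow> gapp g F W' x = s * gapp g F W x"
  by (simp add: gapp_def sum_distrib_left algebra_simps)

lemma Bt_zero_direction: "X x = 0 \<Longrightarrow> Bt g J X Y x = 0"
  by (simp add: Bt_def nablaJ_def Japp_def nabla_zero_direction)

lemma Bt_zero_field:
  assumes "Q x = 0" "\<And>a b. has_pd a (\<lambda>y. Q y $ b) x" "\<And>a c b. has_pd a (\<lambda>y. J y $ c $ b) x"
  shows "Bt g J Y Q x = 0"
proof -
  have "nablaJ g J A Q x = 0" for A
    using nabla_Japp_at_zero[OF assms] by (simp add: nablaJ_def Japp_def)
  then show ?thesis
    by (simp add: Bt_def Japp_def)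
qed

lemma Bt_type_10:
  assumes "open S" "x \<in> S" "J x ** J x = - mat 1" "Japp J Y x = cscale \<i> (Y x)"
    and "\<And>y. y \<in> S \<Longrightarrow> Japp J Z y = cscale \<i> (Z y)" "\<And>a c. has_pd a (\<lambda>y. Z y $ c) x"
  shows "Bt g J Y Z x = cscale 2 (nabla g Y Z x) + cscale (2 * \<i>) (Japp J (nabla g Y Z) x)"
proof -
  have nabla_JZ: "nabla g A (Japp J Z) x = cscale \<i> (nabla g A Z x)" for A
    using nabla_cong_open[OF assms(1,2,5)] nabla_cscale[OF assms(6)] by simp
  have nabla_JY: "nabla g (Japp J Y) Z x = cscale \<i> (nabla g Y Z x)"
    using nabla_cscale_direction[where A = "Japp J Y" and A' = Y, OF assms(4)] .
  show ?thesis
    unfolding Bt_def nablaJ_def Japp_def[of J "\<lambda>y. _ y - _ y"] Japp_def[of J "nabla g _ _"]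
    by (simp add: nabla_JZ nabla_JY jv_diff jv_cscale jv_jv[OF assms(3)])
      (simp add: vec_eq_iff algebra_simps)
qed

lemma Rm_eq_first_term:
  assumes "bracket X Y x = 0" "nabla g Y (nabla g X Z) x = 0"
  shows "Rm g X Y Z W x = gapp g (nabla g X (nabla g Y Z)) W x"
  unfolding Rm_def by (rule gapp_cong_left) (simp add: assms nabla_zero_direction)

lemma RJ_eq_first_term:
  assumes "bracket X Y x = 0" "nabla g X Z x = 0" "nabla g Y (nabla g X Z) x = 0"
    and "\<And>a c. has_pd a (\<lambda>y. nabla g X Z y $ c) x" "\<And>a c b. has_pd a (\<lambda>y. J y $ c $ b) x"
  shows "RJ g J X Y Z W x = gapp g (nabla g X (Japp J (nabla g Y Z))) (Japp J W) x"
proof -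
  have "nabla g Y (Japp J (nabla g X Z)) x = 0"
    using nabla_Japp_at_zero[OF assms(2,4,5)] assms(3) by simp
  then show ?thesis
    unfolding RJ_def by (intro gapp_cong_left) (simp add: assms(1) nabla_zero_direction)
qed

lemma Lt_eq_first_term:
  assumes "nabla g X Y x = 0" "nabla g X Z x = 0"
    and "\<And>a c. has_pd a (\<lambda>y. nabla g X Z y $ c) x" "\<And>a c b. has_pd a (\<lambda>y. J y $ c $ b) x"
  shows "Lt g J X Y Z W x = gapp g (nabla g X (Bt g J Y Z)) W x"
  unfolding Lt_def
  by (rule gapp_cong_left)
    (simp add: Bt_zero_direction[where X = "nabla g X Y", OF assms(1)] Bt_zero_field[OF assms(2-4)])

lemma Lt_eq_curvature_combination:
  assumes "open V" "p \<in> V"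
    and J_square: "\<And>y. y \<in> V \<Longrightarrow> J y ** J y = - mat 1"
    and Y_10: "\<And>y. y \<in> V \<Longrightarrow> Japp J Y y = cscale \<i> (Y y)"
    and Z_10: "\<And>y. y \<in> V \<Longrightarrow> Japp J Z y = cscale \<i> (Z y)"
    and W_01: "Japp J W p = cscale (- \<i>) (W p)"
    and Gam_sym: "\<And>c a b. Gam g p c a b = Gam g p c b a"
    and XY: "nabla g X Y p = 0" and YX: "nabla g Y X p = 0"
    and XZ: "nabla g X Z p = 0" and YXZ: "nabla g Y (nabla g X Z) p = 0"
    and Z_pd: "\<And>y a c. y \<in> V \<Longrightarrow> has_pd a (\<lambda>z. Z z $ c) y"
    and J_pd: "\<And>a c b. has_pd a (\<lambda>y. J y $ c $ b) p"
    and YZ_pd: "\<And>a c. has_pd a (\<lambda>y. nabla g Y Z y $ c) p"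
    and XZ_pd: "\<And>a c. has_pd a (\<lambda>y. nabla g X Z y $ c) p"
  shows "Lt g J X Y Z W p = - 2 * RJ g J X Y Z W p + 2 * Rm g X Y Z W p"
proof -
  let ?P = "nabla g Y Z"
  have torsion: "bracket X Y p = 0"
    using bracket_eq_nabla_diff[OF Gam_sym] XY YX by simp
  have JP_pd: "has_pd a (\<lambda>y. Japp J ?P y $ c) p" for a c
    using has_pd_Japp[OF J_pd YZ_pd] .
  have "Bt g J Y Z y = cscale 2 (?P y) + cscale (2 * \<i>) (Japp J ?P y)" if "y \<in> V" for y
    using Bt_type_10[OF assms(1) that J_square[OF that] Y_10[OF that] Z_10 Z_pd[OF that]] .
  then have "nabla g X (Bt g J Y Z) p
      = nabla g X (\<lambda>y. cscale 2 (?P y) + cscale (2 * \<i>) (Japp J ?P y)) p"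
    by (rule nabla_cong_open[OF assms(1,2)])
  also have "\<dots> = cscale 2 (nabla g X ?P p) + cscale (2 * \<i>) (nabla g X (Japp J ?P) p)"
    using nabla_add[OF has_pd_cscale has_pd_cscale, OF YZ_pd JP_pd]
      nabla_cscale[OF YZ_pd] nabla_cscale[OF JP_pd] by simp
  finally have nabla_Bt: "nabla g X (Bt g J Y Z) p
      = cscale 2 (nabla g X ?P p) + cscale (2 * \<i>) (nabla g X (Japp J ?P) p)" .
  have "Lt g J X Y Z W p
      = 2 * gapp g (nabla g X ?P) W p + 2 * \<i> * gapp g (nabla g X (Japp J ?P)) W p"
    using Lt_eq_first_term[OF XY XZ XZ_pd J_pd]
      gapp_linear_left[where F = "nabla g X (Bt g J Y Z)" and A = "nabla g X ?P"
        and B = "nabla g X (Japp J ?P)", OF nabla_Bt]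
    by simp
  moreover have "RJ g J X Y Z W p = - \<i> * gapp g (nabla g X (Japp J ?P)) W p"
    using RJ_eq_first_term[OF torsion XZ YXZ XZ_pd J_pd]
      gapp_cscale_right[where W' = "Japp J W" and W = W and x = p, OF W_01]
    by simp
  moreover have "Rm g X Y Z W p = gapp g (nabla g X ?P) W p"
    using Rm_eq_first_term[OF torsion YXZ] .
  ultimately show ?thesis
    by (simp add: algebra_simps)
qed

lemma gen_normal_hol_frame_has_pd:
  assumes "gen_normal_hol_frame g J Z p V" "y \<in> V"
  shows "has_pd k (\<lambda>z. Z i z $ c) y"
proof -
  have "smooth_on V (Z i)"
    using assms(1) unfolding gen_normal_hol_frame_def by blast
  then show ?thesis
    using smooth_on_has_pd_linear[OF _ assms(2) bounded_linear_vec_nth] by blast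
qed

lemma gen_normal_hol_frame_has_pd_nabla:
  assumes "almost_kahler U g J \<kappa>" "V \<subseteq> U" "gen_normal_hol_frame g J Z p V"
    and "\<And>a. has_pd k (\<lambda>y. A y $ a) p"
  shows "has_pd k (\<lambda>y. nabla g A (Z r) y $ c) p"
proof -
  have "open U" "smooth_on U g"
    using assms(1) unfolding almost_kahler_def by blast+
  have "open V" "p \<in> V" "smooth_on V (Z r)"
    using assms(3) unfolding gen_normal_hol_frame_def by blast+
  with assms(2) have "p \<in> U"
    by blast
  show ?thesis
    using has_pd_nabla[OF assms(4) gen_normal_hol_frame_has_pd[OF assms(3) \<open>p \<in> V\<close>]
        smooth_on_has_pd_pd_linear[OF \<open>open V\<close> \<open>smooth_on V (Z r)\<close> \<open>p \<in> V\<close> bounded_linear_vec_nth]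
        has_pd_Gam[OF \<open>open U\<close> \<open>p \<in> U\<close> \<open>smooth_on U g\<close> almost_kahler_det_metric[OF assms(1)]]] .
qed

lemma gen_normal_hol_frame_nabla_cconj:
  assumes "gen_normal_hol_frame g J Z p V"
  shows "nabla g (cconj (Z a)) (Z b) p = 0"
proof -
  have "p \<in> V" and "nabla g (Z a) (cconj (Z b)) p = 0"
    using assms unfolding gen_normal_hol_frame_def by blast+
  moreover have "has_pd k (\<lambda>y. cconj (Z b) y $ c) p" for k c
    using has_pd_cnj[OF gen_normal_hol_frame_has_pd[OF assms \<open>p \<in> V\<close>]] by simp
  ultimately show ?thesis
    using nabla_cconj[where B = "cconj (Z b)" and A = "Z a"] by (simp add: vec_eq_iff)
qed

theorem mainTheorem5:
  fixes g J \<kappa> :: "real^'d::finite \<Rightarrow> real^'d^'d"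
    and Z :: "'n::finite \<Rightarrow> real^'d \<Rightarrow> complex^'d"
    and U V :: "(real^'d) set" and p :: "real^'d"
  assumes "CARD('d) = 2 * CARD('n)"
    and "almost_kahler U g J \<kappa>"
    and "V \<subseteq> U"
    and "gen_normal_hol_frame g J Z p V"
  shows "\<forall>i j r s.
    Lt g J (cconj (Z i)) (Z j) (Z r) (cconj (Z s)) p =
      - 2 * RJ g J (cconj (Z i)) (Z j) (Z r) (cconj (Z s)) p
      + 2 * Rm g (cconj (Z i)) (Z j) (Z r) (cconj (Z s)) p"
proof (intro allI)
  fix i j r s
  from assms(2) have "open U" "smooth_on U J" and J_square: "\<forall>x\<in>U. J x ** J x = - mat 1"
    and g_sym: "\<forall>x\<in>U. \<forall>a b. g x $ a $ b = g x $ b $ a"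
    unfolding almost_kahler_def by blast+
  from assms(4) have "open V" "p \<in> V" and Z_10: "\<forall>x\<in>V. \<forall>i. Japp J (Z i) x = cscale \<i> (Z i x)"
    and frame_1: "\<forall>k i. nabla g (Z k) (cconj (Z i)) p = 0"
    and frame_4: "\<forall>r k i. nabla g (Z r) (nabla g (cconj (Z k)) (Z i)) p = 0"
    unfolding gen_normal_hol_frame_def Japp_def by blast+
  have "p \<in> U"
    using assms(3) \<open>p \<in> V\<close> by blast
  note Z_pd = gen_normal_hol_frame_has_pd[OF assms(4)]
  note nabla_Z_pd = gen_normal_hol_frame_has_pd_nabla[OF assms(2-4)]
  show "Lt g J (cconj (Z i)) (Z j) (Z r) (cconj (Z s)) p =
      - 2 * RJ g J (cconj (Z i)) (Z j) (Z r) (cconj (Z s)) p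
      + 2 * Rm g (cconj (Z i)) (Z j) (Z r) (cconj (Z s)) p"
  proof (rule Lt_eq_curvature_combination[OF \<open>open V\<close> \<open>p \<in> V\<close>])
    show "Japp J (cconj (Z s)) p = cscale (- \<i>) (cconj (Z s) p)"
      using Z_10 \<open>p \<in> V\<close> by (simp add: Japp_cconj vec_eq_iff)
    show "Gam g p c a b = Gam g p c b a" for c a b
      using Gam_sym[OF \<open>open U\<close> \<open>p \<in> U\<close>] g_sym by blast
    show "has_pd a (\<lambda>y. J y $ c $ b) p" for a c b
      using smooth_on_has_pd_linear[OF \<open>smooth_on U J\<close> \<open>p \<in> U\<close> bounded_linear_matrix_entry] .
    show "has_pd a (\<lambda>y. nabla g (Z j) (Z r) y $ c) p" for a c
      by (rule nabla_Z_pd) (rule Z_pd[OF \<open>p \<in> V\<close>])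
    show "has_pd a (\<lambda>y. nabla g (cconj (Z i)) (Z r) y $ c) p" for a c
      by (rule nabla_Z_pd) (simp add: has_pd_cnj Z_pd \<open>p \<in> V\<close>)
  qed (use J_square assms(3) Z_10 Z_pd frame_1 frame_4 \<open>p \<in> V\<close>
      gen_normal_hol_frame_nabla_cconj[OF assms(4)] in auto)
qed

end
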